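(* Let $G$ be a finitely generated group and $H$ a subgroup of finite index in $G$, and let $f\in\mathfrak{F}$. If $H\in\mathcal{B}_f$, then $G\in\mathcal{B}_f$.
   Context: $\mathfrak{F}$ is the set of nondecreasing functions from some interval $[Q,\infty)\cap\mathbb{N}$ to the nonnegative reals; $g\preceq f$ means there exist $N\ge0$ and positive integers $K,M$ with $g(n)\le Kf(Mn)$ for all $n\ge N$. For a group $G$ with finite generating set $A$, $S=A\cup A^{-1}$, $\pi:S^*\to G$ the evaluation map and $d_A$ the word metric: a Cayley automatic representation is a bijection $\psi:L\to G$ from a regular $L\subseteq S^*$ such that for each $a\in A$ the relation $\{(\psi^{-1}(g),\psi^{-1}(ga)) : g\in G\}$ is FA-recognizable (i.e., the language of convolutions — parallel readings of the two strings with the shorter padded by a new symbol — is regular). Its function is $h(n)=\max\{d_A(\pi(w),\psi(w)): w\in L,|w|\le n\}$, and $G\in\mathcal{B}_f$ means some Cayley automatic representation (for some finite generating set; this is independent of the choice) has $h\preceq f$. *)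

theory Defs
  imports "HOL-Algebra.Algebra"
begin

definition regular_on :: "'s set \<Rightarrow> 's list set \<Rightarrow> bool" where
  "regular_on \<Sigma>A L \<longleftrightarrow> finite \<Sigma>A \<and> L \<subseteq> lists \<Sigma>A \<and>
     (\<exists>(Q::nat set) q0 (\<delta>::nat \<Rightarrow> 's \<Rightarrow> nat) F.
        finite Q \<and> q0 \<in> Q \<and> (\<forall>q\<in>Q. \<forall>x\<in>\<Sigma>A. \<delta> q x \<in> Q) \<and> F \<subseteq> Q \<and>
        L = {w \<in> lists \<Sigma>A. fold (\<lambda>x q. \<delta> q x) w q0 \<in> F})"

text \<open>Padding symbol is None.\<close>
definition conv :: "'s list \<Rightarrow> 's list \<Rightarrow> ('s option \<times> 's option) list" where
  "conv u v = map (\<lambda>i. (if i < length u then Some (u ! i) else None,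
                         if i < length v then Some (v ! i) else None))
                 [0..<max (length u) (length v)]"

definition conv_alphabet :: "'s set \<Rightarrow> ('s option \<times> 's option) set" where
  "conv_alphabet S = (insert None (Some ` S) \<times> insert None (Some ` S)) - {(None, None)}"

definition FA_recognizable :: "'s set \<Rightarrow> ('s list \<times> 's list) set \<Rightarrow> bool" where
  "FA_recognizable S R \<longleftrightarrow> regular_on (conv_alphabet S) {conv u v | u v. (u, v) \<in> R}"

definition fin_gen :: "('a, 'b) monoid_scheme \<Rightarrow> bool" where
  "fin_gen G \<longleftrightarrow> (\<exists>A. finite A \<and> A \<subseteq> carrier G \<and> generate G A = carrier G)"

definition symgens :: "('a, 'b) monoid_scheme \<Rightarrow> 'a set \<Rightarrow> 'a set" where
  "symgens G A = A \<union> (\<lambda>a. inv\<^bsub>G\<^esub> a) ` A"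

definition evalw :: "('a, 'b) monoid_scheme \<Rightarrow> 'a list \<Rightarrow> 'a" where
  "evalw G w = foldr (\<lambda>x acc. x \<otimes>\<^bsub>G\<^esub> acc) w \<one>\<^bsub>G\<^esub>"

definition word_length :: "('a, 'b) monoid_scheme \<Rightarrow> 'a set \<Rightarrow> 'a \<Rightarrow> nat" where
  "word_length G A g = (LEAST n. \<exists>w \<in> lists (symgens G A). length w = n \<and> evalw G w = g)"

definition word_dist :: "('a, 'b) monoid_scheme \<Rightarrow> 'a set \<Rightarrow> 'a \<Rightarrow> 'a \<Rightarrow> nat" where
  "word_dist G A x y = word_length G A (inv\<^bsub>G\<^esub> x \<otimes>\<^bsub>G\<^esub> y)"

definition cayley_aut_rep ::
  "('a, 'b) monoid_scheme \<Rightarrow> 'a set \<Rightarrow> 'a list set \<Rightarrow> ('a list \<Rightarrow> 'a) \<Rightarrow> bool" where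
  "cayley_aut_rep G A L \<psi> \<longleftrightarrow>
     regular_on (symgens G A) L \<and> bij_betw \<psi> L (carrier G) \<and>
     (\<forall>a\<in>A. FA_recognizable (symgens G A)
         {(u, v). u \<in> L \<and> v \<in> L \<and> \<psi> v = \<psi> u \<otimes>\<^bsub>G\<^esub> a})"

definition rep_fun ::
  "('a, 'b) monoid_scheme \<Rightarrow> 'a set \<Rightarrow> 'a list set \<Rightarrow> ('a list \<Rightarrow> 'a) \<Rightarrow> nat \<Rightarrow> real" where
  "rep_fun G A L \<psi> n =
     (if {w \<in> L. length w \<le> n} = {} then 0
      else real (Max ((\<lambda>w. word_dist G A (evalw G w) (\<psi> w)) ` {w \<in> L. length w \<le> n})))"

definition in_frakF :: "(nat \<Rightarrow> real) \<Rightarrow> bool" where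
  "in_frakF f \<longleftrightarrow> (\<exists>Q::nat. (\<forall>m n. Q \<le> m \<longrightarrow> m \<le> n \<longrightarrow> f m \<le> f n) \<and> (\<forall>n\<ge>Q. 0 \<le> f n))"

definition fprec :: "(nat \<Rightarrow> real) \<Rightarrow> (nat \<Rightarrow> real) \<Rightarrow> bool" where
  "fprec g f \<longleftrightarrow> (\<exists>(N::nat) (K::nat) (M::nat). 0 < K \<and> 0 < M \<and>
      (\<forall>n\<ge>N. g n \<le> real K * f (M * n)))"

definition in_B :: "('a, 'b) monoid_scheme \<Rightarrow> (nat \<Rightarrow> real) \<Rightarrow> bool" where
  "in_B G f \<longleftrightarrow> (\<exists>A L \<psi>. finite A \<and> A \<subseteq> carrier G \<and> generate G A = carrier G \<and>
      cayley_aut_rep G A L \<psi> \<and> fprec (rep_fun G A L \<psi>) f)"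

end

theory Submission
  imports Defs
begin

text \<open>Let \<open>\<psi>\<^sub>H : L\<^sub>H \<rightarrow> H\<close> be a Cayley automatic representation of \<open>H\<close> over generators \<open>B\<close> and
  let \<open>T\<close> be a finite right transversal of \<open>H\<close>, with \<open>\<tau> g \<in> T\<close> representing \<open>H g\<close>. Words
  \<open>u t\<close> with \<open>u \<in> L\<^sub>H\<close>, \<open>t \<in> T\<close> and \<open>\<psi>(u t) = \<psi>\<^sub>H(u) t\<close> represent \<open>G\<close> bijectively over
  \<open>A \<supseteq> B \<union> T\<close>. Since \<open>\<psi>\<^sub>H(u) t a = \<psi>\<^sub>H(u) h \<tau>(t a)\<close> with \<open>h = t a \<tau>(t a)\<inverse> \<in> H\<close>, right
  multiplication by a generator \<open>a\<close> amounts, for each of the finitely many \<open>t\<close>, to right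
  multiplication by a fixed element of \<open>H\<close> and a change of the last letter; the former is
  automatic because automatic relations are closed under converse and composition. Finally
  \<open>\<pi>(u t)\<inverse> \<psi>(u t) = t\<inverse> (\<pi>(u)\<inverse> \<psi>\<^sub>H(u)) t\<close>, so the distance between the two evaluations grows
  at most by the factor \<open>3\<close>.\<close>

section \<open>Regular languages\<close>

definition dfa_lang :: "'s set \<Rightarrow> ('q \<Rightarrow> 's \<Rightarrow> 'q) \<Rightarrow> 'q \<Rightarrow> 'q set \<Rightarrow> 's list set" where
  "dfa_lang \<Sigma> \<delta> q0 F = {w \<in> lists \<Sigma>. fold (\<lambda>x q. \<delta> q x) w q0 \<in> F}"

lemma fold_dfa_closed:
  assumes "\<forall>q\<in>Q. \<forall>x\<in>\<Sigma>. \<delta> q x \<in> Q" "q \<in> Q" "w \<in> lists \<Sigma>"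
  shows "fold (\<lambda>x q. \<delta> q x) w q \<in> Q"
  using assms(2,3) by (induction w arbitrary: q) (use assms(1) in auto)

text \<open>The definition of \<open>regular_on\<close> codes states as naturals; any finite state type will do.\<close>

lemma regular_on_dfa_lang:
  fixes Q :: "'q set"
  assumes "finite \<Sigma>" "finite Q" "q0 \<in> Q" "\<forall>q\<in>Q. \<forall>x\<in>\<Sigma>. \<delta> q x \<in> Q"
  shows "regular_on \<Sigma> (dfa_lang \<Sigma> \<delta> q0 F)"
proof -
  obtain e :: "'q \<Rightarrow> nat" where e: "inj_on e Q"
    using finite_imp_inj_to_nat_seg[OF assms(2)] by blast
  define \<delta>' where "\<delta>' n x = e (\<delta> (inv_into Q e n) x)" for n x
  have fold_e: "fold (\<lambda>x q. \<delta>' q x) w (e q) = e (fold (\<lambda>x q. \<delta> q x) w q)"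
    if "q \<in> Q" "w \<in> lists \<Sigma>" for w q
    using that by (induction w arbitrary: q) (use assms(4) e in \<open>auto simp: \<delta>'_def\<close>)
  have "fold (\<lambda>x q. \<delta>' q x) w (e q0) \<in> e ` (F \<inter> Q) \<longleftrightarrow> fold (\<lambda>x q. \<delta> q x) w q0 \<in> F"
    if "w \<in> lists \<Sigma>" for w
    using fold_e[OF assms(3) that] fold_dfa_closed[OF assms(4,3) that] e
    by (auto simp: inj_on_image_mem_iff)
  then have "dfa_lang \<Sigma> \<delta> q0 F = {w \<in> lists \<Sigma>. fold (\<lambda>x q. \<delta>' q x) w (e q0) \<in> e ` (F \<inter> Q)}"
    by (auto simp: dfa_lang_def)
  moreover have "\<forall>q\<in>e ` Q. \<forall>x\<in>\<Sigma>. \<delta>' q x \<in> e ` Q"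
    using assms(4) e by (auto simp: \<delta>'_def)
  ultimately show ?thesis
    unfolding regular_on_def using assms(1-3)
    by (intro conjI exI[of _ "e ` Q"] exI[of _ "e q0"] exI[of _ \<delta>'] exI[of _ "e ` (F \<inter> Q)"])
      (auto simp: dfa_lang_def)
qed

lemma regular_onE:
  assumes "regular_on \<Sigma> L"
  obtains Q :: "nat set" and q0 \<delta> F where "finite \<Sigma>" "finite Q" "q0 \<in> Q"
    "\<forall>q\<in>Q. \<forall>x\<in>\<Sigma>. \<delta> q x \<in> Q" "L = dfa_lang \<Sigma> \<delta> q0 F"
  using assms unfolding regular_on_def dfa_lang_def by blast

lemma regular_on_subset_lists: "regular_on \<Sigma> L \<Longrightarrow> L \<subseteq> lists \<Sigma>"
  by (simp add: regular_on_def)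

lemma regular_on_finite: "regular_on \<Sigma> L \<Longrightarrow> finite \<Sigma>"
  by (simp add: regular_on_def)

inductive nfa_run :: "('q \<times> 's \<times> 'q) set \<Rightarrow> 'q \<Rightarrow> 's list \<Rightarrow> 'q \<Rightarrow> bool" for \<Delta> where
  Nil: "nfa_run \<Delta> q [] q"
| Cons: "(q, x, q1) \<in> \<Delta> \<Longrightarrow> nfa_run \<Delta> q1 w q' \<Longrightarrow> nfa_run \<Delta> q (x # w) q'"

lemma nfa_run_Nil_iff [simp]: "nfa_run \<Delta> q [] q' \<longleftrightarrow> q' = q"
  by (auto elim: nfa_run.cases intro: nfa_run.Nil)

lemma nfa_run_Cons_iff [simp]:
  "nfa_run \<Delta> q (x # w) q' \<longleftrightarrow> (\<exists>q1. (q, x, q1) \<in> \<Delta> \<and> nfa_run \<Delta> q1 w q')"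
  by (auto elim: nfa_run.cases intro: nfa_run.Cons)

definition nfa_lang :: "'s set \<Rightarrow> ('q \<times> 's \<times> 'q) set \<Rightarrow> 'q set \<Rightarrow> 'q set \<Rightarrow> 's list set" where
  "nfa_lang \<Sigma> \<Delta> I F = {w \<in> lists \<Sigma>. \<exists>q\<in>I. \<exists>q'\<in>F. nfa_run \<Delta> q w q'}"

lemma regular_on_nfa_lang:
  fixes Q :: "'q set"
  assumes "finite \<Sigma>" "finite Q" "I \<subseteq> Q"
    and "\<forall>p x q. (p, x, q) \<in> \<Delta> \<longrightarrow> p \<in> Q \<longrightarrow> x \<in> \<Sigma> \<longrightarrow> q \<in> Q"
  shows "regular_on \<Sigma> (nfa_lang \<Sigma> \<Delta> I F)"
proof -
  define \<delta> where "\<delta> P x = {q' \<in> Q. \<exists>q\<in>P. (q, x, q') \<in> \<Delta>}" for P x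
  have subset_run: "fold (\<lambda>x P. \<delta> P x) w P = {q' \<in> Q. \<exists>q\<in>P. nfa_run \<Delta> q w q'}"
    if "P \<subseteq> Q" "w \<in> lists \<Sigma>" for w P
    using that
  proof (induction w arbitrary: P)
    case (Cons x w)
    have "\<delta> P x \<subseteq> Q" by (auto simp: \<delta>_def)
    with Cons have "fold (\<lambda>x P. \<delta> P x) (x # w) P = {q' \<in> Q. \<exists>q\<in>\<delta> P x. nfa_run \<Delta> q w q'}"
      by simp
    also have "\<dots> = {q' \<in> Q. \<exists>q\<in>P. nfa_run \<Delta> q (x # w) q'}"
      using Cons.prems assms(4) by (auto simp: \<delta>_def; blast)
    finally show ?case .
  qed auto
  have run_closed: "q' \<in> Q" if "nfa_run \<Delta> q w q'" "q \<in> Q" "w \<in> lists \<Sigma>" for q w q'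
    using that by (induction rule: nfa_run.induct) (use assms(4) in auto)
  have "regular_on \<Sigma> (dfa_lang \<Sigma> \<delta> I {P. P \<inter> F \<noteq> {}})"
    by (rule regular_on_dfa_lang[where Q = "Pow Q"]) (use assms in \<open>auto simp: \<delta>_def\<close>)
  moreover have "dfa_lang \<Sigma> \<delta> I {P. P \<inter> F \<noteq> {}} = nfa_lang \<Sigma> \<Delta> I F"
    unfolding dfa_lang_def nfa_lang_def using subset_run[OF assms(3)] run_closed assms(3)
    by (auto; blast)
  ultimately show ?thesis by simp
qed

lemma regular_on_lists: "finite \<Sigma> \<Longrightarrow> regular_on \<Sigma> (lists \<Sigma>)"
  using regular_on_dfa_lang[of \<Sigma> "{()}" "()" "\<lambda>q x. q" "{()}"] by (simp add: dfa_lang_def)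

lemma regular_on_empty: "finite \<Sigma> \<Longrightarrow> regular_on \<Sigma> {}"
  using regular_on_dfa_lang[of \<Sigma> "{()}" "()" "\<lambda>q x. q" "{}"] by (simp add: dfa_lang_def)

lemma regular_on_mono_alphabet:
  assumes "regular_on \<Sigma> L" "\<Sigma> \<subseteq> \<Sigma>'" "finite \<Sigma>'"
  shows "regular_on \<Sigma>' L"
proof -
  obtain Q :: "nat set" and q0 \<delta> F where D: "finite \<Sigma>" "finite Q" "q0 \<in> Q"
    "\<forall>q\<in>Q. \<forall>x\<in>\<Sigma>. \<delta> q x \<in> Q" "L = dfa_lang \<Sigma> \<delta> q0 F"
    using regular_onE[OF assms(1)] by blast
  define \<delta>' where "\<delta>' q x = (case q of None \<Rightarrow> None | Some p \<Rightarrow> if x \<in> \<Sigma> then Some (\<delta> p x) else None)"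
    for q x
  have sink: "fold (\<lambda>x q. \<delta>' q x) w None = None" for w
    by (induction w) (auto simp: \<delta>'_def)
  have fold_\<delta>': "fold (\<lambda>x q. \<delta>' q x) w (Some q) =
      (if w \<in> lists \<Sigma> then Some (fold (\<lambda>x q. \<delta> q x) w q) else None)" for w q
    using sink by (induction w arbitrary: q) (auto simp: \<delta>'_def)
  have "regular_on \<Sigma>' (dfa_lang \<Sigma>' \<delta>' (Some q0) (Some ` F))"
    by (rule regular_on_dfa_lang[where Q = "insert None (Some ` Q)"])
      (use assms D in \<open>auto simp: \<delta>'_def\<close>)
  moreover have "dfa_lang \<Sigma>' \<delta>' (Some q0) (Some ` F) = L"
    using D(5) assms(2) by (auto simp: dfa_lang_def fold_\<delta>')
  ultimately show ?thesis by simp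
qed

lemma regular_on_Int_lists:
  assumes "regular_on \<Sigma>' L" "\<Sigma> \<subseteq> \<Sigma>'"
  shows "regular_on \<Sigma> (L \<inter> lists \<Sigma>)"
proof -
  obtain Q :: "nat set" and q0 \<delta> F where D: "finite \<Sigma>'" "finite Q" "q0 \<in> Q"
    "\<forall>q\<in>Q. \<forall>x\<in>\<Sigma>'. \<delta> q x \<in> Q" "L = dfa_lang \<Sigma>' \<delta> q0 F"
    using regular_onE[OF assms(1)] by blast
  have "regular_on \<Sigma> (dfa_lang \<Sigma> \<delta> q0 F)"
    by (rule regular_on_dfa_lang[where Q = Q]) (use assms D finite_subset in auto)
  moreover have "dfa_lang \<Sigma> \<delta> q0 F = L \<inter> lists \<Sigma>"
    using D(5) assms(2) by (auto simp: dfa_lang_def)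
  ultimately show ?thesis by simp
qed

lemma fold_pair:
  "fold (\<lambda>x (p, q). (\<delta>1 p x, \<delta>2 q x)) w (p, q) =
     (fold (\<lambda>x p. \<delta>1 p x) w p, fold (\<lambda>x q. \<delta>2 q x) w q)"
  by (induction w arbitrary: p q) auto

lemma regular_on_bool_comb:
  assumes "regular_on \<Sigma> L1" "regular_on \<Sigma> L2"
  shows "regular_on \<Sigma> {w \<in> lists \<Sigma>. P (w \<in> L1) (w \<in> L2)}"
proof -
  obtain Q1 :: "nat set" and q1 \<delta>1 F1 where D1: "finite \<Sigma>" "finite Q1" "q1 \<in> Q1"
    "\<forall>q\<in>Q1. \<forall>x\<in>\<Sigma>. \<delta>1 q x \<in> Q1" "L1 = dfa_lang \<Sigma> \<delta>1 q1 F1"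
    using regular_onE[OF assms(1)] by blast
  obtain Q2 :: "nat set" and q2 \<delta>2 F2 where D2: "finite \<Sigma>" "finite Q2" "q2 \<in> Q2"
    "\<forall>q\<in>Q2. \<forall>x\<in>\<Sigma>. \<delta>2 q x \<in> Q2" "L2 = dfa_lang \<Sigma> \<delta>2 q2 F2"
    using regular_onE[OF assms(2)] by blast
  define \<delta> where "\<delta> = (\<lambda>(p, q) x. (\<delta>1 p x, \<delta>2 q x))"
  have fold_\<delta>: "fold (\<lambda>x q. \<delta> q x) w (q1, q2) =
      (fold (\<lambda>x p. \<delta>1 p x) w q1, fold (\<lambda>x q. \<delta>2 q x) w q2)" for w
    using fold_pair[of \<delta>1 \<delta>2 w q1 q2] by (simp add: \<delta>_def case_prod_unfold)
  have "w \<in> dfa_lang \<Sigma> \<delta> (q1, q2) {(p, q). P (p \<in> F1) (q \<in> F2)} \<longleftrightarrow>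
      w \<in> {w \<in> lists \<Sigma>. P (w \<in> L1) (w \<in> L2)}" for w
    by (cases "w \<in> lists \<Sigma>") (simp_all add: D1(5) D2(5) dfa_lang_def fold_\<delta>)
  then have "dfa_lang \<Sigma> \<delta> (q1, q2) {(p, q). P (p \<in> F1) (q \<in> F2)} =
      {w \<in> lists \<Sigma>. P (w \<in> L1) (w \<in> L2)}"
    by blast
  moreover have "regular_on \<Sigma> (dfa_lang \<Sigma> \<delta> (q1, q2) {(p, q). P (p \<in> F1) (q \<in> F2)})"
    by (rule regular_on_dfa_lang[where Q = "Q1 \<times> Q2"]) (use D1 D2 in \<open>auto simp: \<delta>_def\<close>)
  ultimately show ?thesis by simp
qed

lemma regular_on_Int:
  assumes "regular_on \<Sigma> L1" "regular_on \<Sigma> L2"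
  shows "regular_on \<Sigma> (L1 \<inter> L2)"
proof -
  have "L1 \<inter> L2 = {w \<in> lists \<Sigma>. w \<in> L1 \<and> w \<in> L2}"
    using regular_on_subset_lists[OF assms(1)] by auto
  then show ?thesis using regular_on_bool_comb[OF assms, of "(\<and>)"] by simp
qed

lemma regular_on_Un:
  assumes "regular_on \<Sigma> L1" "regular_on \<Sigma> L2"
  shows "regular_on \<Sigma> (L1 \<union> L2)"
proof -
  have "L1 \<union> L2 = {w \<in> lists \<Sigma>. w \<in> L1 \<or> w \<in> L2}"
    using regular_on_subset_lists[OF assms(1)] regular_on_subset_lists[OF assms(2)] by auto
  then show ?thesis using regular_on_bool_comb[OF assms, of "(\<or>)"] by simp
qed

lemma regular_on_UN:
  assumes "finite I" "finite \<Sigma>" "\<And>i. i \<in> I \<Longrightarrow> regular_on \<Sigma> (L i)"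
  shows "regular_on \<Sigma> (\<Union>i\<in>I. L i)"
  using assms by (induction I rule: finite_induct) (auto intro: regular_on_Un regular_on_empty)

lemma regular_on_vimage_map:
  assumes "regular_on \<Sigma> L" "h ` \<Sigma>' \<subseteq> \<Sigma>" "finite \<Sigma>'"
  shows "regular_on \<Sigma>' {w \<in> lists \<Sigma>'. map h w \<in> L}"
proof -
  obtain Q :: "nat set" and q0 \<delta> F where D: "finite \<Sigma>" "finite Q" "q0 \<in> Q"
    "\<forall>q\<in>Q. \<forall>x\<in>\<Sigma>. \<delta> q x \<in> Q" "L = dfa_lang \<Sigma> \<delta> q0 F"
    using regular_onE[OF assms(1)] by blast
  have "regular_on \<Sigma>' (dfa_lang \<Sigma>' (\<lambda>q x. \<delta> q (h x)) q0 F)"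
    by (rule regular_on_dfa_lang[where Q = Q]) (use assms D in auto)
  moreover have "dfa_lang \<Sigma>' (\<lambda>q x. \<delta> q (h x)) q0 F = {w \<in> lists \<Sigma>'. map h w \<in> L}"
    using D(5) assms(2) by (auto simp: dfa_lang_def fold_map comp_def image_subset_iff)
  ultimately show ?thesis by simp
qed

lemma nfa_run_map_iff:
  assumes "\<forall>q\<in>Q. \<forall>x\<in>\<Sigma>. \<delta> q x \<in> Q" "q \<in> Q"
  shows "nfa_run {(q, h x, \<delta> q x) | q x. q \<in> Q \<and> x \<in> \<Sigma>} q s q' \<longleftrightarrow>
    (\<exists>w\<in>lists \<Sigma>. map h w = s \<and> fold (\<lambda>x q. \<delta> q x) w q = q')"
  using assms(2)
proof (induction s arbitrary: q)
  case (Cons y s)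
  let ?\<Delta> = "{(q, h x, \<delta> q x) | q x. q \<in> Q \<and> x \<in> \<Sigma>}"
  have "(q, y, q1) \<in> ?\<Delta> \<longleftrightarrow> (\<exists>x\<in>\<Sigma>. y = h x \<and> q1 = \<delta> q x)" for q1
    using Cons.prems by auto
  then have "nfa_run ?\<Delta> q (y # s) q' \<longleftrightarrow> (\<exists>x\<in>\<Sigma>. y = h x \<and> nfa_run ?\<Delta> (\<delta> q x) s q')"
    by auto
  also have "\<dots> \<longleftrightarrow> (\<exists>x\<in>\<Sigma>. y = h x \<and>
      (\<exists>w\<in>lists \<Sigma>. map h w = s \<and> fold (\<lambda>x q. \<delta> q x) w (\<delta> q x) = q'))"
    using Cons.IH Cons.prems assms(1) by blast
  also have "\<dots> \<longleftrightarrow> (\<exists>w\<in>lists \<Sigma>. map h w = y # s \<and> fold (\<lambda>x q. \<delta> q x) w q = q')"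
    (is "?L \<longleftrightarrow> ?R")
  proof
    assume ?L
    then obtain x w where "x \<in> \<Sigma>" "w \<in> lists \<Sigma>" "y = h x" "map h w = s"
      "fold (\<lambda>x q. \<delta> q x) (x # w) q = q'"
      by auto
    then show ?R by (intro bexI[of _ "x # w"]) auto
  next
    assume ?R
    then obtain x w where "x \<in> \<Sigma>" "w \<in> lists \<Sigma>" "y = h x" "map h w = s"
      "fold (\<lambda>x q. \<delta> q x) (x # w) q = q'"
      by (auto simp: map_eq_Cons_conv in_lists_conv_set)
    then show ?L by auto
  qed
  finally show ?case .
qed auto

text \<open>The image under a letter-to-letter map is recognised by the nondeterministic automaton that
  guesses a preimage letter at each step.\<close>

lemma regular_on_image_map:
  assumes "regular_on \<Sigma> L" "h ` \<Sigma> \<subseteq> \<Sigma>'" "finite \<Sigma>'"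
  shows "regular_on \<Sigma>' (map h ` L)"
proof -
  obtain Q :: "nat set" and q0 \<delta> F where D: "finite \<Sigma>" "finite Q" "q0 \<in> Q"
    "\<forall>q\<in>Q. \<forall>x\<in>\<Sigma>. \<delta> q x \<in> Q" "L = dfa_lang \<Sigma> \<delta> q0 F"
    using regular_onE[OF assms(1)] by blast
  define \<Delta> where "\<Delta> = {(q, h x, \<delta> q x) | q x. q \<in> Q \<and> x \<in> \<Sigma>}"
  have "map h ` L \<subseteq> lists \<Sigma>'"
    using assms(2) D(5) by (auto simp: dfa_lang_def image_subset_iff)
  then have "nfa_lang \<Sigma>' \<Delta> {q0} F = map h ` L"
    using D(5) by (auto simp: nfa_lang_def dfa_lang_def \<Delta>_def nfa_run_map_iff[OF D(4,3)])
  moreover have "regular_on \<Sigma>' (nfa_lang \<Sigma>' \<Delta> {q0} F)"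
    by (rule regular_on_nfa_lang[where Q = Q]) (use assms D in \<open>auto simp: \<Delta>_def\<close>)
  ultimately show ?thesis by simp
qed

lemma regular_on_strip_padding:
  assumes "regular_on \<Sigma> L" "c \<in> \<Sigma>"
  shows "regular_on \<Sigma> {s \<in> lists \<Sigma>. \<exists>k. s @ replicate k c \<in> L}"
proof -
  obtain Q :: "nat set" and q0 \<delta> F where D: "finite \<Sigma>" "finite Q" "q0 \<in> Q"
    "\<forall>q\<in>Q. \<forall>x\<in>\<Sigma>. \<delta> q x \<in> Q" "L = dfa_lang \<Sigma> \<delta> q0 F"
    using regular_onE[OF assms(1)] by blast
  define F' where "F' = {q. \<exists>k. fold (\<lambda>x q. \<delta> q x) (replicate k c) q \<in> F}"
  have "regular_on \<Sigma> (dfa_lang \<Sigma> \<delta> q0 F')"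
    by (rule regular_on_dfa_lang[where Q = Q]) (use D in auto)
  moreover have "dfa_lang \<Sigma> \<delta> q0 F' = {s \<in> lists \<Sigma>. \<exists>k. s @ replicate k c \<in> L}"
    using D(5) assms(2) by (auto simp: dfa_lang_def F'_def)
  ultimately show ?thesis by simp
qed

lemma append_replicate_snoc_iff:
  "(\<exists>s k. w @ [x] = s @ replicate k c \<and> P s) \<longleftrightarrow>
     P (w @ [x]) \<or> (x = c \<and> (\<exists>s k. w = s @ replicate k c \<and> P s))"
proof
  assume "\<exists>s k. w @ [x] = s @ replicate k c \<and> P s"
  then obtain s k where sk: "w @ [x] = s @ replicate k c" "P s" by blast
  show "P (w @ [x]) \<or> (x = c \<and> (\<exists>s k. w = s @ replicate k c \<and> P s))"
  proof (cases k)
    case (Suc j)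
    then have "w @ [x] = (s @ replicate j c) @ [c]" using sk by (simp add: replicate_append_same)
    then show ?thesis using sk by blast
  qed (use sk in simp)
next
  assume "P (w @ [x]) \<or> (x = c \<and> (\<exists>s k. w = s @ replicate k c \<and> P s))"
  then show "\<exists>s k. w @ [x] = s @ replicate k c \<and> P s"
    by (metis append_Nil2 append_assoc replicate_0 replicate_Suc replicate_append_same)
qed

lemma regular_on_pad:
  assumes "regular_on \<Sigma> L" "c \<in> \<Sigma>"
  shows "regular_on \<Sigma> {s @ replicate k c | s k. s \<in> L}"
proof -
  obtain Q :: "nat set" and q0 \<delta> F where D: "finite \<Sigma>" "finite Q" "q0 \<in> Q"
    "\<forall>q\<in>Q. \<forall>x\<in>\<Sigma>. \<delta> q x \<in> Q" "L = dfa_lang \<Sigma> \<delta> q0 F"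
    using regular_onE[OF assms(1)] by blast
  define run where "run w = fold (\<lambda>x q. \<delta> q x) w q0" for w
  define padded where "padded w \<longleftrightarrow> (\<exists>s k. w = s @ replicate k c \<and> run s \<in> F)" for w
  define \<delta>' where "\<delta>' = (\<lambda>(q, b) x. (\<delta> q x, \<delta> q x \<in> F \<or> (x = c \<and> b)))"
  have fold_\<delta>': "fold (\<lambda>x q. \<delta>' q x) w (q0, q0 \<in> F) = (run w, padded w)" for w
  proof (induction w rule: rev_induct)
    case Nil
    have "padded [] \<longleftrightarrow> q0 \<in> F" by (auto simp: padded_def run_def)
    then show ?case by (simp add: run_def)
  next
    case (snoc x w)
    have "run (w @ [x]) = \<delta> (run w) x" by (simp add: run_def)
    moreover have "padded (w @ [x]) \<longleftrightarrow> run (w @ [x]) \<in> F \<or> (x = c \<and> padded w)"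
      unfolding padded_def by (rule append_replicate_snoc_iff)
    ultimately show ?case using snoc by (simp add: \<delta>'_def)
  qed
  have "w \<in> lists \<Sigma> \<and> padded w \<longleftrightarrow> (\<exists>s k. w = s @ replicate k c \<and> s \<in> L)" for w
    using D(5) assms(2) unfolding padded_def run_def dfa_lang_def by auto
  then have "dfa_lang \<Sigma> \<delta>' (q0, q0 \<in> F) {p. snd p} = {s @ replicate k c | s k. s \<in> L}"
    by (auto simp: dfa_lang_def fold_\<delta>')
  moreover have "regular_on \<Sigma> (dfa_lang \<Sigma> \<delta>' (q0, q0 \<in> F) {p. snd p})"
    by (rule regular_on_dfa_lang[where Q = "Q \<times> UNIV"]) (use D in \<open>auto simp: \<delta>'_def\<close>)
  ultimately show ?thesis by simp
qed

lemma regular_on_snoc: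
  assumes "regular_on \<Sigma> L" "T \<subseteq> \<Sigma>"
  shows "regular_on \<Sigma> {u @ [t] | u t. u \<in> L \<and> t \<in> T}"
proof -
  obtain Q :: "nat set" and q0 \<delta> F where D: "finite \<Sigma>" "finite Q" "q0 \<in> Q"
    "\<forall>q\<in>Q. \<forall>x\<in>\<Sigma>. \<delta> q x \<in> Q" "L = dfa_lang \<Sigma> \<delta> q0 F"
    using regular_onE[OF assms(1)] by blast
  define run where "run w = fold (\<lambda>x q. \<delta> q x) w q0" for w
  define \<delta>' where "\<delta>' = (\<lambda>(q, b::bool) x. (\<delta> q x, q \<in> F \<and> x \<in> T))"
  have fold_\<delta>': "fold (\<lambda>x q. \<delta>' q x) w (q0, False) =
      (run w, w \<noteq> [] \<and> last w \<in> T \<and> run (butlast w) \<in> F)" for w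
    by (induction w rule: rev_induct) (auto simp: run_def \<delta>'_def)
  have "regular_on \<Sigma> (dfa_lang \<Sigma> \<delta>' (q0, False) {p. snd p})"
    by (rule regular_on_dfa_lang[where Q = "Q \<times> UNIV"]) (use D in \<open>auto simp: \<delta>'_def\<close>)
  moreover have "dfa_lang \<Sigma> \<delta>' (q0, False) {p. snd p} = {u @ [t] | u t. u \<in> L \<and> t \<in> T}"
  proof (intro equalityI subsetI)
    fix w assume "w \<in> dfa_lang \<Sigma> \<delta>' (q0, False) {p. snd p}"
    then have w: "w \<in> lists \<Sigma>" "w \<noteq> []" "last w \<in> T" "run (butlast w) \<in> F"
      by (auto simp: dfa_lang_def fold_\<delta>')
    have "butlast w \<in> L"
      using w(1,4) D(5) by (auto simp: dfa_lang_def run_def dest: in_set_butlastD)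
    moreover have "w = butlast w @ [last w]" using w(2) by simp
    ultimately show "w \<in> {u @ [t] | u t. u \<in> L \<and> t \<in> T}" using w(3) by blast
  next
    fix w assume "w \<in> {u @ [t] | u t. u \<in> L \<and> t \<in> T}"
    then obtain u t where "w = u @ [t]" "u \<in> L" "t \<in> T" by blast
    then show "w \<in> dfa_lang \<Sigma> \<delta>' (q0, False) {p. snd p}"
      using D(5) assms(2) by (auto simp: dfa_lang_def fold_\<delta>' run_def)
  qed
  ultimately show ?thesis by simp
qed

section \<open>Convolutions of words\<close>

lemma list_pair_induct [case_names Nil_Nil Cons_Nil Nil_Cons Cons_Cons]:
  assumes "P [] []" "\<And>a u. P u [] \<Longrightarrow> P (a # u) []" "\<And>b v. P [] v \<Longrightarrow> P [] (b # v)"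
    and "\<And>a u b v. P u v \<Longrightarrow> P (a # u) (b # v)"
  shows "P u v"
proof (induction u arbitrary: v)
  case Nil
  show ?case by (induction v) (use assms in auto)
next
  case (Cons a u)
  show ?case by (cases v) (use Cons assms in auto)
qed

lemma conv_simps [simp]:
  "conv [] [] = []"
  "conv (a # u) [] = (Some a, None) # conv u []"
  "conv [] (b # v) = (None, Some b) # conv [] v"
  "conv (a # u) (b # v) = (Some a, Some b) # conv u v"
  by (simp_all add: conv_def upt_conv_Cons map_Suc_upt[symmetric] del: upt_Suc)

lemma length_conv [simp]: "length (conv u v) = max (length u) (length v)"
  by (simp add: conv_def)

lemma padding_notin_conv: "(None, None) \<notin> set (conv u v)"
  by (induction u v rule: list_pair_induct) auto

lemma conv_in_lists_iff: "conv u v \<in> lists (conv_alphabet S) \<longleftrightarrow> u \<in> lists S \<and> v \<in> lists S"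
  by (induction u v rule: list_pair_induct) (auto simp: conv_alphabet_def)

lemma map_swap_conv: "map prod.swap (conv u v) = conv v u"
  by (induction u v rule: list_pair_induct) auto

lemma conv_diag: "conv u u = map (\<lambda>x. (Some x, Some x)) u"
  by (induction u) auto

lemma conv_snoc_right: "conv u (u @ [x]) = map (\<lambda>x. (Some x, Some x)) u @ [(None, Some x)]"
  by (induction u) auto

definition pad :: "'s list \<Rightarrow> nat \<Rightarrow> 's option list" where
  "pad u n = map Some u @ replicate (n - length u) None"

lemma pad_inj_aux: "map Some u @ replicate a None = map Some u' @ replicate b None \<Longrightarrow> u = u'"
proof (induction u arbitrary: u')
  case Nil then show ?case by (cases u'; cases a) auto
next
  case (Cons x u) then show ?case by (cases u') (auto simp: Cons_replicate_eq)
qed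

lemma pad_inj: "pad u n = pad u' n \<Longrightarrow> u = u'"
  unfolding pad_def by (rule pad_inj_aux)

lemma map_fst_conv_padded:
  "map fst (conv u v @ replicate k (None, None)) = pad u (max (length u) (length v) + k)"
  by (induction u v rule: list_pair_induct) (auto simp: pad_def replicate_add[symmetric] max_def)

lemma map_snd_conv_padded:
  "map snd (conv u v @ replicate k (None, None)) = pad v (max (length u) (length v) + k)"
  by (induction u v rule: list_pair_induct) (auto simp: pad_def replicate_add[symmetric] max_def)

lemma conv_inj: "conv u v = conv u' v' \<Longrightarrow> u = u' \<and> v = v'"
  using map_fst_conv_padded[of u v 0] map_fst_conv_padded[of u' v' 0]
    map_snd_conv_padded[of u v 0] map_snd_conv_padded[of u' v' 0]
  by (auto simp: pad_def dest: pad_inj_aux)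

lemma zip_pad:
  "length u \<le> n \<Longrightarrow> length v \<le> n \<Longrightarrow>
     zip (pad u n) (pad v n) = conv u v @ replicate (n - max (length u) (length v)) (None, None)"
proof (induction u v arbitrary: n rule: list_pair_induct)
  case Nil_Nil
  then show ?case by (simp add: pad_def zip_replicate)
next
  case (Cons_Nil a u)
  then show ?case by (cases n) (simp_all add: pad_def)
next
  case (Nil_Cons b v)
  then show ?case by (cases n) (simp_all add: pad_def)
next
  case (Cons_Cons a u b v)
  then show ?case by (cases n) (simp_all add: pad_def)
qed

lemma conv_padded_iff:
  "(\<exists>k. s = conv u v @ replicate k (None, None)) \<longleftrightarrow>
     max (length u) (length v) \<le> length s \<and> map fst s = pad u (length s) \<and> map snd s = pad v (length s)"
proof
  assume "\<exists>k. s = conv u v @ replicate k (None, None)"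
  then show "max (length u) (length v) \<le> length s \<and> map fst s = pad u (length s) \<and>
      map snd s = pad v (length s)"
    using map_fst_conv_padded map_snd_conv_padded by fastforce
next
  assume tracks: "max (length u) (length v) \<le> length s \<and> map fst s = pad u (length s) \<and>
      map snd s = pad v (length s)"
  have "s = zip (map fst s) (map snd s)" by (simp add: zip_map_fst_snd)
  also have "\<dots> = conv u v @ replicate (length s - max (length u) (length v)) (None, None)"
    using tracks zip_pad[of u "length s" v] by simp
  finally show "\<exists>k. s = conv u v @ replicate k (None, None)" ..
qed

lemma append_replicate_cancel:
  assumes "xs @ replicate a c = ys @ replicate b c" "c \<notin> set xs" "c \<notin> set ys"
  shows "xs = ys"
proof -
  have strip: "dropWhile (\<lambda>z. z = c) (rev (zs @ replicate k c)) = rev zs" if "c \<notin> set zs" for zs k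
  proof -
    have "dropWhile (\<lambda>z. z = c) (replicate k c @ rev zs) = dropWhile (\<lambda>z. z = c) (rev zs)"
      by (induction k) auto
    moreover have "dropWhile (\<lambda>z. z = c) (rev zs) = rev zs"
      using that by (cases "rev zs") auto
    ultimately show ?thesis by simp
  qed
  from strip[OF assms(2), of a] strip[OF assms(3), of b] assms(1) show ?thesis by simp
qed

section \<open>Automatic relations\<close>

definition conv_lang :: "('s list \<times> 's list) set \<Rightarrow> ('s option \<times> 's option) list set" where
  "conv_lang R = {conv u v | u v. (u, v) \<in> R}"

lemma FA_recognizable_iff: "FA_recognizable S R \<longleftrightarrow> regular_on (conv_alphabet S) (conv_lang R)"
  by (simp add: FA_recognizable_def conv_lang_def)

lemma conv_in_conv_lang_iff [simp]: "conv u v \<in> conv_lang R \<longleftrightarrow> (u, v) \<in> R"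
  by (auto simp: conv_lang_def dest: conv_inj)

lemma finite_conv_alphabet: "finite S \<Longrightarrow> finite (conv_alphabet S)"
  by (simp add: conv_alphabet_def)

lemma conv_alphabet_mono: "S \<subseteq> S' \<Longrightarrow> conv_alphabet S \<subseteq> conv_alphabet S'"
  by (auto simp: conv_alphabet_def)

lemma FA_recognizable_lists:
  assumes "FA_recognizable S R" "(u, v) \<in> R"
  shows "u \<in> lists S" "v \<in> lists S"
proof -
  have "conv u v \<in> lists (conv_alphabet S)"
    using assms regular_on_subset_lists by (force simp: FA_recognizable_iff)
  then show "u \<in> lists S" "v \<in> lists S" by (simp_all add: conv_in_lists_iff)
qed

lemma FA_recognizable_finite:
  assumes "FA_recognizable S R"
  shows "finite S"
proof -
  have "finite (conv_alphabet S)"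
    using assms regular_on_finite by (auto simp: FA_recognizable_iff)
  moreover have "(\<lambda>a. (Some a, None)) ` S \<subseteq> conv_alphabet S"
    by (auto simp: conv_alphabet_def)
  ultimately show "finite S"
    by (meson finite_imageD finite_subset inj_onI prod.inject option.inject)
qed

lemma FA_recognizable_mono_alphabet:
  assumes "FA_recognizable S R" "S \<subseteq> S'" "finite S'"
  shows "FA_recognizable S' R"
  using assms regular_on_mono_alphabet conv_alphabet_mono finite_conv_alphabet
  by (metis FA_recognizable_iff)

lemma FA_recognizable_UN:
  assumes "finite I" "finite S" "\<And>i. i \<in> I \<Longrightarrow> FA_recognizable S (R i)"
  shows "FA_recognizable S (\<Union>i\<in>I. R i)"
proof -
  have "conv_lang (\<Union>i\<in>I. R i) = (\<Union>i\<in>I. conv_lang (R i))"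
    by (auto simp: conv_lang_def)
  then show ?thesis
    using assms by (simp add: FA_recognizable_iff regular_on_UN finite_conv_alphabet)
qed

lemma FA_recognizable_converse:
  assumes "FA_recognizable S R"
  shows "FA_recognizable S (R\<inverse>)"
proof -
  have "conv_lang (R\<inverse>) = map prod.swap ` conv_lang R"
  proof (intro equalityI subsetI)
    fix s assume "s \<in> conv_lang (R\<inverse>)"
    then obtain u v where "(u, v) \<in> R" "s = conv v u" by (auto simp: conv_lang_def)
    then show "s \<in> map prod.swap ` conv_lang R"
      by (metis conv_in_conv_lang_iff image_eqI map_swap_conv)
  next
    fix s assume "s \<in> map prod.swap ` conv_lang R"
    then obtain u v where "(u, v) \<in> R" "s = map prod.swap (conv u v)" by (auto simp: conv_lang_def)
    then show "s \<in> conv_lang (R\<inverse>)" by (simp add: map_swap_conv)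
  qed
  moreover have "regular_on (conv_alphabet S) (map prod.swap ` conv_lang R)"
    using assms FA_recognizable_finite[OF assms]
    by (intro regular_on_image_map finite_conv_alphabet)
      (auto simp: FA_recognizable_iff conv_alphabet_def)
  ultimately show ?thesis by (simp add: FA_recognizable_iff)
qed

lemma FA_recognizable_Id_on:
  assumes "regular_on S L"
  shows "FA_recognizable S (Id_on L)"
proof -
  have "conv_lang (Id_on L) = (\<lambda>u. conv u u) ` L"
    unfolding conv_lang_def Id_on_def by blast
  then have "conv_lang (Id_on L) = map (\<lambda>x. (Some x, Some x)) ` L"
    by (simp add: conv_diag)
  moreover have "regular_on (conv_alphabet S) (map (\<lambda>x. (Some x, Some x)) ` L)"
    using assms regular_on_finite[OF assms]
    by (intro regular_on_image_map finite_conv_alphabet) (auto simp: conv_alphabet_def)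
  ultimately show ?thesis by (simp add: FA_recognizable_iff)
qed

lemma FA_recognizable_snoc_right:
  assumes "finite S" "x \<in> S"
  shows "FA_recognizable S {(u, u @ [x]) | u. u \<in> lists S}"
proof -
  have "conv_lang {(u, u @ [x]) | u. u \<in> lists S} = (\<lambda>u. conv u (u @ [x])) ` lists S"
    unfolding conv_lang_def by blast
  also have "\<dots> = {w @ [t] | w t. w \<in> conv_lang (Id_on (lists S)) \<and> t \<in> {(None, Some x)}}"
    unfolding conv_snoc_right conv_lang_def Id_on_def by (auto simp: conv_diag)
  finally have "conv_lang {(u, u @ [x]) | u. u \<in> lists S} =
      {w @ [t] | w t. w \<in> conv_lang (Id_on (lists S)) \<and> t \<in> {(None, Some x)}}" .
  moreover have "regular_on (conv_alphabet S)
      {w @ [t] | w t. w \<in> conv_lang (Id_on (lists S)) \<and> t \<in> {(None, Some x)}}"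
    using FA_recognizable_Id_on[OF regular_on_lists[OF assms(1)]] assms(2)
    by (intro regular_on_snoc) (auto simp: FA_recognizable_iff conv_alphabet_def)
  ultimately show ?thesis by (simp add: FA_recognizable_iff)
qed

text \<open>Composition is recognised on padded convolutions: the three words of a composable pair are
  read in parallel, padded to a common length, and the middle track is projected away.\<close>

definition padded_conv_lang :: "('s list \<times> 's list) set \<Rightarrow> ('s option \<times> 's option) list set" where
  "padded_conv_lang R = {conv u v @ replicate k (None, None) | u v k. (u, v) \<in> R}"

definition opt_alphabet :: "'s set \<Rightarrow> 's option set" where
  "opt_alphabet S = insert None (Some ` S)"

lemma finite_opt_alphabet: "finite S \<Longrightarrow> finite (opt_alphabet S)"
  by (simp add: opt_alphabet_def)

lemma conv_alphabet_subset_opt: "conv_alphabet S \<subseteq> opt_alphabet S \<times> opt_alphabet S"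
  by (auto simp: conv_alphabet_def opt_alphabet_def)

lemma length_pad [simp]: "length u \<le> n \<Longrightarrow> length (pad u n) = n"
  by (simp add: pad_def)

lemma zip_in_lists: "xs \<in> lists A \<Longrightarrow> ys \<in> lists B \<Longrightarrow> zip xs ys \<in> lists (A \<times> B)"
  by (auto dest: set_zip_leftD set_zip_rightD)

lemma pad_in_lists_opt: "u \<in> lists S \<Longrightarrow> pad u n \<in> lists (opt_alphabet S)"
  by (auto simp: pad_def opt_alphabet_def)

lemma padded_conv_lang_iff:
  "s \<in> padded_conv_lang R \<longleftrightarrow>
     (\<exists>u v. (u, v) \<in> R \<and> max (length u) (length v) \<le> length s \<and>
        map fst s = pad u (length s) \<and> map snd s = pad v (length s))"
  unfolding padded_conv_lang_def using conv_padded_iff by blast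

lemma regular_on_padded_conv_lang:
  assumes "FA_recognizable S R"
  shows "regular_on (opt_alphabet S \<times> opt_alphabet S) (padded_conv_lang R)"
proof -
  have "finite (opt_alphabet S \<times> opt_alphabet S)"
    using FA_recognizable_finite[OF assms] by (simp add: finite_opt_alphabet)
  then have "regular_on (opt_alphabet S \<times> opt_alphabet S) (conv_lang R)"
    using assms conv_alphabet_subset_opt by (metis FA_recognizable_iff regular_on_mono_alphabet)
  then have "regular_on (opt_alphabet S \<times> opt_alphabet S)
      {s @ replicate k (None, None) | s k. s \<in> conv_lang R}"
    by (rule regular_on_pad) (simp add: opt_alphabet_def)
  moreover have "{s @ replicate k (None, None) | s k. s \<in> conv_lang R} = padded_conv_lang R"
    unfolding conv_lang_def padded_conv_lang_def by blast
  ultimately show ?thesis by simp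
qed

lemma FA_recognizable_if_padded:
  assumes "finite S" "R \<subseteq> lists S \<times> lists S"
    and "regular_on (opt_alphabet S \<times> opt_alphabet S) Y" "Y \<subseteq> padded_conv_lang R"
    and "\<And>s. s \<in> padded_conv_lang R \<Longrightarrow> \<exists>k. s @ replicate k (None, None) \<in> Y"
  shows "FA_recognizable S R"
proof -
  have "conv_lang R = {s \<in> lists (opt_alphabet S \<times> opt_alphabet S).
      \<exists>k. s @ replicate k (None, None) \<in> Y} \<inter> lists (conv_alphabet S)"
  proof (intro equalityI subsetI)
    fix s assume "s \<in> conv_lang R"
    then obtain u v where uv: "(u, v) \<in> R" "s = conv u v" by (auto simp: conv_lang_def)
    then have "s @ replicate 0 (None, None) \<in> padded_conv_lang R"
      unfolding padded_conv_lang_def by blast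
    then have "s \<in> padded_conv_lang R" by simp
    moreover have "s \<in> lists (conv_alphabet S)"
      using uv assms(2) by (auto simp: conv_in_lists_iff)
    ultimately show "s \<in> {s \<in> lists (opt_alphabet S \<times> opt_alphabet S).
        \<exists>k. s @ replicate k (None, None) \<in> Y} \<inter> lists (conv_alphabet S)"
      using assms(5) conv_alphabet_subset_opt by blast
  next
    fix s assume s: "s \<in> {s \<in> lists (opt_alphabet S \<times> opt_alphabet S).
        \<exists>k. s @ replicate k (None, None) \<in> Y} \<inter> lists (conv_alphabet S)"
    then obtain k u v k' where "s @ replicate k (None, None) = conv u v @ replicate k' (None, None)"
      "(u, v) \<in> R"
      using assms(4) unfolding padded_conv_lang_def by blast
    moreover have "(None, None) \<notin> set s"
      using s by (auto simp: conv_alphabet_def)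
    ultimately show "s \<in> conv_lang R"
      using append_replicate_cancel padding_notin_conv conv_in_conv_lang_iff by metis
  qed
  moreover have "regular_on (opt_alphabet S \<times> opt_alphabet S)
      {s \<in> lists (opt_alphabet S \<times> opt_alphabet S). \<exists>k. s @ replicate k (None, None) \<in> Y}"
    by (rule regular_on_strip_padding[OF assms(3)]) (simp add: opt_alphabet_def)
  ultimately show ?thesis
    using regular_on_Int_lists[OF _ conv_alphabet_subset_opt] by (simp add: FA_recognizable_iff)
qed

definition composable_tracks ::
  "'s set \<Rightarrow> ('s list \<times> 's list) set \<Rightarrow> ('s list \<times> 's list) set \<Rightarrow>
    ('s option \<times> 's option \<times> 's option) list set" where
  "composable_tracks S R1 R2 =
    {t \<in> lists (opt_alphabet S \<times> opt_alphabet S \<times> opt_alphabet S).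
      map (\<lambda>(a, b, c). (a, b)) t \<in> padded_conv_lang R1 \<and> map snd t \<in> padded_conv_lang R2}"

lemma track_projections:
  "fst \<circ> (\<lambda>(a, b, c). (a, b)) = fst" "snd \<circ> (\<lambda>(a, b, c). (a, b)) = fst \<circ> snd"
  "fst \<circ> (\<lambda>(a, b, c). (a, c)) = fst" "snd \<circ> (\<lambda>(a, b, c). (a, c)) = snd \<circ> snd"
  by auto

lemma regular_on_composable_tracks:
  assumes "FA_recognizable S R1" "FA_recognizable S R2"
  shows "regular_on (opt_alphabet S \<times> opt_alphabet S \<times> opt_alphabet S) (composable_tracks S R1 R2)"
proof -
  have "finite (opt_alphabet S)"
    using FA_recognizable_finite[OF assms(1)] by (simp add: finite_opt_alphabet)
  moreover have "composable_tracks S R1 R2 =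
      {t \<in> lists (opt_alphabet S \<times> opt_alphabet S \<times> opt_alphabet S).
        map (\<lambda>(a, b, c). (a, b)) t \<in> padded_conv_lang R1} \<inter>
      {t \<in> lists (opt_alphabet S \<times> opt_alphabet S \<times> opt_alphabet S).
        map snd t \<in> padded_conv_lang R2}"
    by (auto simp: composable_tracks_def)
  ultimately show ?thesis
    using regular_on_padded_conv_lang[OF assms(1)] regular_on_padded_conv_lang[OF assms(2)]
    by (simp, intro regular_on_Int regular_on_vimage_map) auto
qed

lemma outer_tracks_subset:
  "map (\<lambda>(a, b, c). (a, c)) ` composable_tracks S R1 R2 \<subseteq> padded_conv_lang (R1 O R2)"
proof
  fix s assume "s \<in> map (\<lambda>(a, b, c). (a, c)) ` composable_tracks S R1 R2"
  then obtain t where t: "t \<in> composable_tracks S R1 R2" "s = map (\<lambda>(a, b, c). (a, c)) t"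
    by blast
  from t(1) obtain u v v' w where
    "(u, v) \<in> R1" "max (length u) (length v) \<le> length t"
    "map fst t = pad u (length t)" "map (fst \<circ> snd) t = pad v (length t)"
    "(v', w) \<in> R2" "max (length v') (length w) \<le> length t"
    "map (fst \<circ> snd) t = pad v' (length t)" "map (snd \<circ> snd) t = pad w (length t)"
    unfolding composable_tracks_def padded_conv_lang_iff by (auto simp: track_projections)
  moreover from this have "v = v'" by (metis pad_inj)
  ultimately show "s \<in> padded_conv_lang (R1 O R2)"
    unfolding padded_conv_lang_iff t(2) by (auto simp: track_projections)
qed

lemma padded_relcomp_in_outer_tracks:
  assumes "FA_recognizable S R1" "FA_recognizable S R2" "s \<in> padded_conv_lang (R1 O R2)"
  shows "\<exists>k. s @ replicate k (None, None) \<in> map (\<lambda>(a, b, c). (a, c)) ` composable_tracks S R1 R2"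
proof -
  obtain u v w k where uvw: "(u, v) \<in> R1" "(v, w) \<in> R2" "s = conv u w @ replicate k (None, None)"
    using assms(3) unfolding padded_conv_lang_def by blast
  have lists: "u \<in> lists S" "v \<in> lists S" "w \<in> lists S"
    using FA_recognizable_lists assms(1,2) uvw(1,2) by metis+
  define n where "n = max (length s) (length v)"
  define t where "t = zip (pad u n) (zip (pad v n) (pad w n))"
  have len: "length u \<le> n" "length v \<le> n" "length w \<le> n" "length s \<le> n"
    using uvw(3) by (auto simp: n_def)
  have t_snd: "map snd t = zip (pad v n) (pad w n)"
    using len by (simp add: t_def map_snd_zip)
  have t_tracks: "map fst t = pad u n" "map (fst \<circ> snd) t = pad v n" "map (snd \<circ> snd) t = pad w n"
    "length t = n"
    using len by (simp_all add: t_def map_fst_zip t_snd flip: map_map)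
  have "t \<in> lists (opt_alphabet S \<times> opt_alphabet S \<times> opt_alphabet S)"
    unfolding t_def by (intro zip_in_lists pad_in_lists_opt lists)
  moreover have "map (\<lambda>(a, b, c). (a, b)) t \<in> padded_conv_lang R1"
    "map snd t \<in> padded_conv_lang R2"
    unfolding padded_conv_lang_iff using uvw len by (auto simp: track_projections t_tracks)
  ultimately have "t \<in> composable_tracks S R1 R2" by (simp add: composable_tracks_def)
  moreover obtain k' where k': "map (\<lambda>(a, b, c). (a, c)) t = conv u w @ replicate k' (None, None)"
    using len conv_padded_iff[of "map (\<lambda>(a, b, c). (a, c)) t" u w]
    by (auto simp: track_projections t_tracks)
  moreover have "k' = k + (n - length s)"
    using arg_cong[OF k', of length] t_tracks(4) uvw(3) len(4) by simp
  ultimately show ?thesis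
    using uvw(3) by (intro exI[of _ "n - length s"]) (force simp: replicate_add)
qed

lemma FA_recognizable_relcomp:
  assumes "FA_recognizable S R1" "FA_recognizable S R2"
  shows "FA_recognizable S (R1 O R2)"
proof (rule FA_recognizable_if_padded)
  show "finite S" using FA_recognizable_finite[OF assms(1)] .
  show "R1 O R2 \<subseteq> lists S \<times> lists S" using FA_recognizable_lists assms by blast
  show "regular_on (opt_alphabet S \<times> opt_alphabet S)
      (map (\<lambda>(a, b, c). (a, c)) ` composable_tracks S R1 R2)"
    using regular_on_composable_tracks[OF assms] finite_opt_alphabet[OF \<open>finite S\<close>]
    by (intro regular_on_image_map) auto
  show "map (\<lambda>(a, b, c). (a, c)) ` composable_tracks S R1 R2 \<subseteq> padded_conv_lang (R1 O R2)"
    by (rule outer_tracks_subset)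
qed (rule padded_relcomp_in_outer_tracks[OF assms])

lemma FA_recognizable_snoc:
  assumes "FA_recognizable S R" "x \<in> S" "y \<in> S"
  shows "FA_recognizable S {(u @ [x], v @ [y]) | u v. (u, v) \<in> R}"
proof -
  have "{(u @ [x], v @ [y]) | u v. (u, v) \<in> R} =
      {(u, u @ [x]) | u. u \<in> lists S}\<inverse> O R O {(v, v @ [y]) | v. v \<in> lists S}"
    using FA_recognizable_lists[OF assms(1)] by blast
  then show ?thesis
    using assms FA_recognizable_finite[OF assms(1)]
    by (simp add: FA_recognizable_relcomp FA_recognizable_converse FA_recognizable_snoc_right)
qed

section \<open>Words and word lengths\<close>

lemma evalw_carrier_update [simp]: "evalw (G\<lparr>carrier := K\<rparr>) w = evalw G w"
  by (simp add: evalw_def)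

context group
begin

lemma evalw_Nil [simp]: "evalw G [] = \<one>"
  by (simp add: evalw_def)

lemma evalw_Cons [simp]: "evalw G (a # w) = a \<otimes> evalw G w"
  by (simp add: evalw_def)

lemma evalw_in_subgroup:
  assumes "subgroup K G" "set w \<subseteq> K"
  shows "evalw G w \<in> K"
  using assms(2) by (induction w) (auto simp: subgroup.one_closed[OF assms(1)] subgroup.m_closed[OF assms(1)])

lemma evalw_closed: "set w \<subseteq> carrier G \<Longrightarrow> evalw G w \<in> carrier G"
  using evalw_in_subgroup[OF subgroup_self] .

lemma evalw_append:
  assumes "set u \<subseteq> carrier G" "set v \<subseteq> carrier G"
  shows "evalw G (u @ v) = evalw G u \<otimes> evalw G v"
  using assms by (induction u) (auto simp: evalw_closed m_assoc)

lemma symgens_carrier_update: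
  assumes "subgroup K G" "B \<subseteq> K"
  shows "symgens (G\<lparr>carrier := K\<rparr>) B = symgens G B"
proof -
  have "inv\<^bsub>G\<lparr>carrier := K\<rparr>\<^esub> b = inv b" if "b \<in> B" for b
    using assms that by (simp add: subsetD)
  then show ?thesis by (simp add: symgens_def)
qed

lemma symgens_closed: "A \<subseteq> carrier G \<Longrightarrow> symgens G A \<subseteq> carrier G"
  by (auto simp: symgens_def)

lemma symgens_subset:
  assumes "subgroup K G" "B \<subseteq> K"
  shows "symgens G B \<subseteq> K"
  using assms by (auto simp: symgens_def subgroup.m_inv_closed)

lemma word_length_carrier_update:
  assumes "subgroup K G" "B \<subseteq> K"
  shows "word_length (G\<lparr>carrier := K\<rparr>) B = word_length G B"
  using symgens_carrier_update[OF assms] by (simp add: word_length_def [abs_def])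

lemma word_dist_carrier_update:
  assumes "subgroup K G" "B \<subseteq> K" "x \<in> K" "y \<in> K"
  shows "word_dist (G\<lparr>carrier := K\<rparr>) B x y = word_dist G B x y"
  using assms by (simp add: word_dist_def word_length_carrier_update)

lemma word_length_le:
  assumes "w \<in> lists (symgens G A)" "evalw G w = g"
  shows "word_length G A g \<le> length w"
  unfolding word_length_def by (rule Least_le) (use assms in blast)

lemma word_length_witness:
  assumes "w \<in> lists (symgens G A)" "evalw G w = g"
  obtains w' where "w' \<in> lists (symgens G A)" "length w' = word_length G A g" "evalw G w' = g"
proof -
  have "\<exists>n. \<exists>w \<in> lists (symgens G A). length w = n \<and> evalw G w = g" using assms by blast
  from LeastI_ex[OF this] show ?thesis using that unfolding word_length_def by blast
qed

lemma generate_imp_word: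
  assumes "B \<subseteq> carrier G" "h \<in> generate G B"
  shows "\<exists>w \<in> lists (symgens G B). evalw G w = h"
  using assms(2)
proof (induction rule: generate.induct)
  case one
  show ?case by (intro bexI[of _ "[]"]) simp_all
next
  case (incl h)
  then show ?case using assms(1) by (intro bexI[of _ "[h]"]) (auto simp: symgens_def)
next
  case (inv h)
  then show ?case using assms(1) by (intro bexI[of _ "[inv h]"]) (auto simp: symgens_def)
next
  case (eng h1 h2)
  then obtain w1 w2 where "w1 \<in> lists (symgens G B)" "evalw G w1 = h1"
    "w2 \<in> lists (symgens G B)" "evalw G w2 = h2"
    by blast
  moreover have "set w1 \<subseteq> carrier G" "set w2 \<subseteq> carrier G"
    using calculation symgens_closed[OF assms(1)] by auto
  ultimately show ?case by (intro bexI[of _ "w1 @ w2"]) (auto simp: evalw_append)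
qed

text \<open>The factor 3 absorbs the two extra letters, since only \<open>\<one>\<close> has length \<open>0\<close>.\<close>

lemma word_length_conj_le:
  assumes "B \<subseteq> A" "A \<subseteq> carrier G" "t \<in> A" "z \<in> generate G B"
  shows "word_length G A (inv t \<otimes> z \<otimes> t) \<le> 3 * word_length G B z"
proof -
  have symB: "symgens G B \<subseteq> symgens G A" using assms(1) by (auto simp: symgens_def)
  have t_sym: "t \<in> symgens G A" "inv t \<in> symgens G A" using assms(3) by (auto simp: symgens_def)
  have tG: "t \<in> carrier G" using assms(2,3) by blast
  obtain w0 where "w0 \<in> lists (symgens G B)" "evalw G w0 = z"
    using generate_imp_word assms by blast
  then obtain w where w: "w \<in> lists (symgens G B)" "length w = word_length G B z" "evalw G w = z"
    by (rule word_length_witness)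
  have wG: "set w \<subseteq> carrier G" using w(1) symgens_closed assms(1,2) by blast
  show ?thesis
  proof (cases "w = []")
    case True
    then have "inv t \<otimes> z \<otimes> t = evalw G []" using w(3)[symmetric] tG by simp
    then show ?thesis using word_length_le[of "[]" A] by simp
  next
    case False
    have "evalw G ([inv t] @ w @ [t]) = inv t \<otimes> z \<otimes> t"
      using wG tG w(3) evalw_closed[OF wG] by (simp add: evalw_append m_assoc)
    moreover have "[inv t] @ w @ [t] \<in> lists (symgens G A)"
      using w(1) lists_mono[OF symB] t_sym by auto
    ultimately have "word_length G A (inv t \<otimes> z \<otimes> t) \<le> length w + 2"
      using word_length_le by fastforce
    also have "\<dots> \<le> 3 * word_length G B z" using False w(2) by (cases w) auto
    finally show ?thesis .
  qed
qed

end

section \<open>Recognising right multiplication by arbitrary elements\<close>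

definition right_mult_rel :: "('a, 'b) monoid_scheme \<Rightarrow> 'c list set \<Rightarrow> ('c list \<Rightarrow> 'a) \<Rightarrow> 'a \<Rightarrow>
    ('c list \<times> 'c list) set" where
  "right_mult_rel G L \<psi> g = {(u, v). u \<in> L \<and> v \<in> L \<and> \<psi> v = \<psi> u \<otimes>\<^bsub>G\<^esub> g}"

lemma cayley_aut_rep_iff:
  "cayley_aut_rep G A L \<psi> \<longleftrightarrow> regular_on (symgens G A) L \<and> bij_betw \<psi> L (carrier G) \<and>
     (\<forall>a\<in>A. FA_recognizable (symgens G A) (right_mult_rel G L \<psi> a))"
  by (simp add: cayley_aut_rep_def right_mult_rel_def)

lemma right_mult_rel_carrier_update [simp]:
  "right_mult_rel (G\<lparr>carrier := K\<rparr>) L \<psi> g = right_mult_rel G L \<psi> g"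
  by (simp add: right_mult_rel_def)

context group
begin

lemma right_mult_rel_one:
  assumes "subgroup K G" "bij_betw \<psi> L K"
  shows "right_mult_rel G L \<psi> \<one> = Id_on L"
proof -
  have "\<psi> u \<otimes> \<one> = \<psi> u" if "u \<in> L" for u
    using that assms bij_betwE subgroup.mem_carrier by fastforce
  then show ?thesis
    using bij_betw_imp_inj_on[OF assms(2)] by (auto simp: right_mult_rel_def dest: inj_onD)
qed

lemma right_mult_rel_inv:
  assumes "subgroup K G" "bij_betw \<psi> L K" "h \<in> K"
  shows "right_mult_rel G L \<psi> (inv h) = (right_mult_rel G L \<psi> h)\<inverse>"
proof -
  have "\<psi> v = \<psi> u \<otimes> inv h \<longleftrightarrow> \<psi> u = \<psi> v \<otimes> h" if "u \<in> L" "v \<in> L" for u v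
  proof -
    have "\<psi> u \<in> carrier G" "\<psi> v \<in> carrier G" "h \<in> carrier G"
      using that assms bij_betwE subgroup.mem_carrier by fastforce+
    then show ?thesis using inv_solve_right' by (metis inv_closed inv_inv)
  qed
  then show ?thesis by (auto simp: right_mult_rel_def)
qed

lemma right_mult_rel_mult:
  assumes "subgroup K G" "bij_betw \<psi> L K" "h1 \<in> K" "h2 \<in> K"
  shows "right_mult_rel G L \<psi> (h1 \<otimes> h2) = right_mult_rel G L \<psi> h1 O right_mult_rel G L \<psi> h2"
proof -
  have \<psi>K: "\<psi> u \<in> K" if "u \<in> L" for u
    using that assms(2) bij_betwE by blast
  have \<psi>G: "\<psi> u \<in> carrier G" if "u \<in> L" for u
    by (rule subgroup.mem_carrier[OF assms(1) \<psi>K[OF that]])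
  have h: "h1 \<in> carrier G" "h2 \<in> carrier G"
    using subgroup.mem_carrier[OF assms(1)] assms(3,4) by auto
  show ?thesis
  proof (intro equalityI subsetI)
    fix p assume "p \<in> right_mult_rel G L \<psi> (h1 \<otimes> h2)"
    then obtain u w where uw: "p = (u, w)" "u \<in> L" "w \<in> L" "\<psi> w = \<psi> u \<otimes> (h1 \<otimes> h2)"
      by (auto simp: right_mult_rel_def)
    have "\<psi> u \<otimes> h1 \<in> K"
      by (rule subgroup.m_closed[OF assms(1) \<psi>K[OF uw(2)] assms(3)])
    then obtain v where v: "v \<in> L" "\<psi> v = \<psi> u \<otimes> h1"
      using assms(2) by (metis bij_betw_def imageE)
    then have "\<psi> w = \<psi> v \<otimes> h2" using uw(4) \<psi>G[OF uw(2)] h by (simp add: m_assoc)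
    then show "p \<in> right_mult_rel G L \<psi> h1 O right_mult_rel G L \<psi> h2"
      using uw v unfolding right_mult_rel_def by blast
  next
    fix p assume "p \<in> right_mult_rel G L \<psi> h1 O right_mult_rel G L \<psi> h2"
    then obtain u v w where "p = (u, w)" "u \<in> L" "w \<in> L"
      "\<psi> v = \<psi> u \<otimes> h1" "\<psi> w = \<psi> v \<otimes> h2"
      unfolding right_mult_rel_def by blast
    then show "p \<in> right_mult_rel G L \<psi> (h1 \<otimes> h2)"
      using \<psi>G h by (simp add: right_mult_rel_def m_assoc)
  qed
qed

lemma FA_recognizable_right_mult_rel:
  assumes "subgroup K G" "bij_betw \<psi> L K" "regular_on S L" "B \<subseteq> K"
    and "\<And>b. b \<in> B \<Longrightarrow> FA_recognizable S (right_mult_rel G L \<psi> b)"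
    and "h \<in> generate G B"
  shows "FA_recognizable S (right_mult_rel G L \<psi> h)"
  using assms(6)
proof (induction rule: generate.induct)
  case one
  show ?case
    using FA_recognizable_Id_on[OF assms(3)] right_mult_rel_one[OF assms(1,2)] by simp
next
  case (incl h)
  then show ?case by (rule assms(5))
next
  case (inv h)
  then have "h \<in> K" using assms(4) by blast
  then show ?case
    using right_mult_rel_inv[OF assms(1,2)] FA_recognizable_converse[OF assms(5)[OF inv.hyps]]
    by simp
next
  case (eng h1 h2)
  have "generate G B \<subseteq> K" by (rule generate_subgroup_incl[OF assms(4,1)])
  then have "h1 \<in> K" "h2 \<in> K" using eng.hyps by auto
  then show ?case
    using right_mult_rel_mult[OF assms(1,2)] FA_recognizable_relcomp[OF eng.IH] by simp
qed

end

lemma (in group) rcos_eq_iff: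
  assumes "subgroup H G" "g \<in> carrier G" "x \<in> carrier G"
  shows "H #> g = H #> x \<longleftrightarrow> g \<otimes> inv x \<in> H"
  using assms repr_independence repr_independenceD subgroup.rcos_module[OF assms(1) is_group]
  by metis

lemma (in group) right_transversal:
  assumes "subgroup H G" "finite (rcosets H)"
  obtains T \<tau> where "finite T" "T \<subseteq> carrier G"
    and "\<And>g. g \<in> carrier G \<Longrightarrow> \<tau> g \<in> T"
    and "\<And>g. g \<in> carrier G \<Longrightarrow> g \<otimes> inv (\<tau> g) \<in> H"
    and "\<And>g t. g \<in> carrier G \<Longrightarrow> t \<in> T \<Longrightarrow> g \<otimes> inv t \<in> H \<Longrightarrow> t = \<tau> g"
proof -
  define \<tau> where "\<tau> g = (SOME x. x \<in> H #> g)" for g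
  define T where "T = \<tau> ` carrier G"
  have \<tau>_rcos: "\<tau> g \<in> H #> g" if "g \<in> carrier G" for g
    unfolding \<tau>_def using rcos_self[OF that assms(1)] by (rule someI)
  have \<tau>_carrier: "\<tau> g \<in> carrier G" if "g \<in> carrier G" for g
    using subgroup.elemrcos_carrier[OF assms(1) is_group that \<tau>_rcos[OF that]] .
  have \<tau>_coset: "H #> \<tau> g = H #> g" if "g \<in> carrier G" for g
    using repr_independence[OF \<tau>_rcos[OF that] that assms(1)] by simp
  have \<tau>_eq: "\<tau> g = \<tau> x" if "g \<in> carrier G" "x \<in> carrier G" "H #> g = H #> x" for g x
    using that by (simp add: \<tau>_def)
  have "T = (\<lambda>C. SOME x. x \<in> C) ` (rcosets H)"
    by (auto simp: T_def \<tau>_def RCOSETS_def)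
  then have "finite T" using assms(2) by simp
  moreover have "T \<subseteq> carrier G" using \<tau>_carrier by (auto simp: T_def)
  moreover have "g \<otimes> inv (\<tau> g) \<in> H" if "g \<in> carrier G" for g
    using rcos_eq_iff[OF assms(1) that \<tau>_carrier[OF that]] \<tau>_coset[OF that] by simp
  moreover have "t = \<tau> g" if "g \<in> carrier G" "t \<in> T" "g \<otimes> inv t \<in> H" for g t
  proof -
    from that(2) obtain x where x: "x \<in> carrier G" "t = \<tau> x" by (auto simp: T_def)
    have "H #> g = H #> x"
      using rcos_eq_iff[OF assms(1) that(1) \<tau>_carrier[OF x(1)]] that(3) \<tau>_coset[OF x(1)] x(2) by simp
    then show ?thesis using \<tau>_eq[OF that(1) x(1)] x(2) by simp
  qed
  ultimately show ?thesis using that T_def by blast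
qed

lemma finite_bounded_words: "L \<subseteq> lists S \<Longrightarrow> finite S \<Longrightarrow> finite {w \<in> L. length w \<le> n}"
  by (rule finite_subset[OF _ finite_lists_length_le[of S n]]) auto

lemma rep_fun_le_scaled:
  fixes c :: nat
  assumes "L \<subseteq> lists S" "finite S" "L' \<subseteq> lists S'" "finite S'"
    and "\<And>w. w \<in> L' \<Longrightarrow> \<exists>u\<in>L. length u \<le> length w \<and>
      word_dist G' A' (evalw G' w) (\<psi>' w) \<le> c * word_dist G A (evalw G u) (\<psi> u)"
  shows "rep_fun G' A' L' \<psi>' n \<le> c * rep_fun G A L \<psi> n"
proof (cases "{w \<in> L'. length w \<le> n} = {}")
  case True
  then show ?thesis by (simp add: rep_fun_def)
next
  case False
  define d' where "d' w = word_dist G' A' (evalw G' w) (\<psi>' w)" for w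
  define d where "d u = word_dist G A (evalw G u) (\<psi> u)" for u
  have "Max (d' ` {w \<in> L'. length w \<le> n}) \<in> d' ` {w \<in> L'. length w \<le> n}"
    using False finite_bounded_words[OF assms(3,4)] by (intro Max_in) auto
  then obtain w where w: "w \<in> L'" "length w \<le> n" "Max (d' ` {w \<in> L'. length w \<le> n}) = d' w"
    by auto
  obtain u where u: "u \<in> L" "length u \<le> length w" "d' w \<le> c * d u"
    using assms(5)[OF w(1)] by (auto simp: d'_def d_def)
  have u_in: "u \<in> {u \<in> L. length u \<le> n}" using u w(2) by auto
  have "d u \<le> Max (d ` {u \<in> L. length u \<le> n})"
    using finite_bounded_words[OF assms(1,2)] u_in by (intro Max_ge) auto
  then have "d' w \<le> c * Max (d ` {u \<in> L. length u \<le> n})"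
    using u(3) by (meson le_trans mult_le_mono2)
  then show ?thesis
    using False u_in w(3) unfolding rep_fun_def d'_def [symmetric] d_def [symmetric]
    by (auto simp flip: of_nat_mult)
qed

lemma fprec_le_scaled:
  fixes c :: nat and g g' f :: "nat \<Rightarrow> real"
  assumes "\<And>n. g n \<le> c * g' n" "0 < c" "fprec g' f"
  shows "fprec g f"
proof -
  obtain N K M where NKM: "0 < K" "0 < M" "\<And>n. n \<ge> N \<Longrightarrow> g' n \<le> real K * f (M * n)"
    using assms(3) unfolding fprec_def by blast
  have "g n \<le> real (c * K) * f (M * n)" if "n \<ge> N" for n
  proof -
    have "g n \<le> c * g' n" by (rule assms(1))
    also have "\<dots> \<le> c * (real K * f (M * n))" using NKM(3)[OF that] by (simp add: mult_left_mono)
    finally show ?thesis by simp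
  qed
  then show ?thesis
    unfolding fprec_def using NKM(1,2) assms(2) by (intro exI[of _ N] exI[of _ "c * K"] exI[of _ M]) simp
qed

section \<open>Extending a representation of a finite index subgroup\<close>

locale finite_index_extension = group G for G (structure) +
  fixes H T :: "'a set" and \<tau> :: "'a \<Rightarrow> 'a"
    and B :: "'a set" and LH :: "'a list set" and \<psi>H :: "'a list \<Rightarrow> 'a" and A :: "'a set"
  assumes subgroup_H: "subgroup H G"
    and finite_T: "finite T" and T_carrier: "T \<subseteq> carrier G"
    and \<tau>_in_T: "g \<in> carrier G \<Longrightarrow> \<tau> g \<in> T"
    and \<tau>_coset: "g \<in> carrier G \<Longrightarrow> g \<otimes> inv (\<tau> g) \<in> H"
    and \<tau>_unique: "g \<in> carrier G \<Longrightarrow> t \<in> T \<Longrightarrow> g \<otimes> inv t \<in> H \<Longrightarrow> t = \<tau> g"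
    and B_H: "B \<subseteq> H" and generate_B: "generate (G\<lparr>carrier := H\<rparr>) B = H"
    and rep_H: "cayley_aut_rep (G\<lparr>carrier := H\<rparr>) B LH \<psi>H"
    and finite_A: "finite A" and A_carrier: "A \<subseteq> carrier G" and generate_A: "generate G A = carrier G"
    and B_A: "B \<subseteq> A" and T_A: "T \<subseteq> A"
begin

definition LG :: "'a list set" where
  "LG = {u @ [t] | u t. u \<in> LH \<and> t \<in> T}"

definition \<psi>G :: "'a list \<Rightarrow> 'a" where
  "\<psi>G w = \<psi>H (butlast w) \<otimes> last w"

lemma \<psi>G_snoc [simp]: "\<psi>G (u @ [t]) = \<psi>H u \<otimes> t"
  by (simp add: \<psi>G_def)

lemma H_carrier: "H \<subseteq> carrier G"
  using subgroup.subset[OF subgroup_H] .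

lemma generate_B_G: "generate G B = H"
  using generate_B generate_consistent[OF B_H subgroup_H] by simp

lemma regular_LH: "regular_on (symgens G B) LH"
  and bij_\<psi>H: "bij_betw \<psi>H LH H"
  and right_mult_rel_B: "b \<in> B \<Longrightarrow> FA_recognizable (symgens G B) (right_mult_rel G LH \<psi>H b)"
  using rep_H symgens_carrier_update[OF subgroup_H B_H] by (auto simp: cayley_aut_rep_iff)

lemma \<psi>H_in_H: "u \<in> LH \<Longrightarrow> \<psi>H u \<in> H"
  using bij_\<psi>H bij_betwE by blast

lemma \<psi>H_carrier: "u \<in> LH \<Longrightarrow> \<psi>H u \<in> carrier G"
  using \<psi>H_in_H H_carrier by blast

lemma LH_lists: "LH \<subseteq> lists (symgens G B)"
  using regular_on_subset_lists[OF regular_LH] .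

lemma symgens_B_A: "symgens G B \<subseteq> symgens G A"
  using B_A by (auto simp: symgens_def)

lemma finite_symgens_A: "finite (symgens G A)"
  using finite_A by (simp add: symgens_def)

lemma right_mult_rel_H: "h \<in> H \<Longrightarrow> FA_recognizable (symgens G A) (right_mult_rel G LH \<psi>H h)"
  using FA_recognizable_right_mult_rel[OF subgroup_H bij_\<psi>H regular_LH B_H right_mult_rel_B]
    generate_B_G FA_recognizable_mono_alphabet[OF _ symgens_B_A finite_symgens_A]
  by blast

lemma regular_LG: "regular_on (symgens G A) LG"
  unfolding LG_def
  using regular_on_mono_alphabet[OF regular_LH symgens_B_A finite_symgens_A] T_A
  by (intro regular_on_snoc) (auto simp: symgens_def)

lemma inj_on_\<psi>G: "inj_on \<psi>G LG"
proof (rule inj_onI)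
  fix w w' assume w: "w \<in> LG" "w' \<in> LG" "\<psi>G w = \<psi>G w'"
  obtain u t where ut: "w = u @ [t]" "u \<in> LH" "t \<in> T" using w(1) by (auto simp: LG_def)
  obtain u' t' where ut': "w' = u' @ [t']" "u' \<in> LH" "t' \<in> T" using w(2) by (auto simp: LG_def)
  have tG: "t \<in> carrier G" "t' \<in> carrier G" using ut(3) ut'(3) T_carrier by auto
  define g where "g = \<psi>H u \<otimes> t"
  have gG: "g \<in> carrier G" using \<psi>H_carrier[OF ut(2)] tG by (simp add: g_def)
  have g': "g = \<psi>H u' \<otimes> t'" using w(3) ut ut' by (simp add: g_def)
  have "g \<otimes> inv t = \<psi>H u"
    using \<psi>H_carrier[OF ut(2)] tG by (simp add: g_def m_assoc)
  moreover have "g \<otimes> inv t' = \<psi>H u'"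
    unfolding g' using \<psi>H_carrier[OF ut'(2)] tG by (simp add: m_assoc)
  ultimately have "g \<otimes> inv t \<in> H" "g \<otimes> inv t' \<in> H"
    using \<psi>H_in_H ut(2) ut'(2) by simp_all
  then have "t = t'" using \<tau>_unique[OF gG] ut(3) ut'(3) by metis
  then have "\<psi>H u = \<psi>H u'" using g' \<psi>H_carrier ut(2) ut'(2) tG by (simp add: g_def)
  then have "u = u'" using bij_\<psi>H ut(2) ut'(2) by (metis bij_betw_imp_inj_on inj_onD)
  then show "w = w'" using ut ut' \<open>t = t'\<close> by simp
qed

lemma image_\<psi>G: "\<psi>G ` LG = carrier G"
proof (intro equalityI subsetI)
  fix g assume "g \<in> \<psi>G ` LG"
  then show "g \<in> carrier G" using \<psi>H_carrier T_carrier by (auto simp: LG_def)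
next
  fix g assume g: "g \<in> carrier G"
  then have \<tau>g: "\<tau> g \<in> T" "\<tau> g \<in> carrier G" using \<tau>_in_T T_carrier by auto
  obtain u where u: "u \<in> LH" "\<psi>H u = g \<otimes> inv (\<tau> g)"
    using \<tau>_coset[OF g] bij_\<psi>H by (metis bij_betw_def imageE)
  have "\<psi>G (u @ [\<tau> g]) = g" using u(2) g \<tau>g(2) by (simp add: m_assoc)
  moreover have "u @ [\<tau> g] \<in> LG" using u(1) \<tau>g(1) by (auto simp: LG_def)
  ultimately show "g \<in> \<psi>G ` LG" by (metis image_eqI)
qed

lemma bij_\<psi>G: "bij_betw \<psi>G LG (carrier G)"
  by (simp add: bij_betw_def inj_on_\<psi>G image_\<psi>G)

lemma \<tau>_carrier: "g \<in> carrier G \<Longrightarrow> \<tau> g \<in> carrier G"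
  using \<tau>_in_T T_carrier by blast

lemma \<tau>_mult_left:
  assumes "h \<in> H" "g \<in> carrier G"
  shows "\<tau> (h \<otimes> g) = \<tau> g"
proof -
  have hG: "h \<in> carrier G" using assms(1) H_carrier by blast
  have "h \<otimes> g \<otimes> inv (\<tau> g) = h \<otimes> (g \<otimes> inv (\<tau> g))"
    using hG assms(2) \<tau>_in_T T_carrier by (simp add: m_assoc subset_iff)
  then have "h \<otimes> g \<otimes> inv (\<tau> g) \<in> H"
    using assms \<tau>_coset subgroup.m_closed[OF subgroup_H] by simp
  then show ?thesis using \<tau>_unique[of "h \<otimes> g" "\<tau> g"] hG assms(2) \<tau>_in_T by simp
qed

lemma snoc_mult_iff:
  assumes "u \<in> LH" "v \<in> LH" "t \<in> T" "t' \<in> T" "a \<in> carrier G"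
  shows "\<psi>H v \<otimes> t' = \<psi>H u \<otimes> t \<otimes> a \<longleftrightarrow>
    t' = \<tau> (t \<otimes> a) \<and> \<psi>H v = \<psi>H u \<otimes> (t \<otimes> a \<otimes> inv (\<tau> (t \<otimes> a)))"
proof -
  have c: "\<psi>H u \<in> carrier G" "\<psi>H v \<in> carrier G" "t \<in> carrier G" "t' \<in> carrier G"
    "t \<otimes> a \<in> carrier G" "\<tau> (t \<otimes> a) \<in> carrier G"
    using assms \<psi>H_carrier T_carrier \<tau>_carrier by auto
  have \<tau>: "\<tau> (\<psi>H u \<otimes> t \<otimes> a) = \<tau> (t \<otimes> a)"
    using \<tau>_mult_left[OF \<psi>H_in_H[OF assms(1)] c(5)] c assms(5) by (simp add: m_assoc)
  show ?thesis
  proof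
    assume "\<psi>H v \<otimes> t' = \<psi>H u \<otimes> t \<otimes> a"
    then have solved: "\<psi>H u \<otimes> t \<otimes> a \<otimes> inv t' = \<psi>H v"
      using c assms(5) inv_solve_right' m_closed by metis
    then have "t' = \<tau> (t \<otimes> a)"
      using \<tau>_unique[of "\<psi>H u \<otimes> t \<otimes> a" t'] \<psi>H_in_H[OF assms(2)] assms(4,5) c \<tau> by simp
    moreover from this have "\<psi>H v = \<psi>H u \<otimes> (t \<otimes> a \<otimes> inv (\<tau> (t \<otimes> a)))"
      using solved c assms(5) by (simp add: m_assoc)
    ultimately show "t' = \<tau> (t \<otimes> a) \<and> \<psi>H v = \<psi>H u \<otimes> (t \<otimes> a \<otimes> inv (\<tau> (t \<otimes> a)))" ..
  next
    assume "t' = \<tau> (t \<otimes> a) \<and> \<psi>H v = \<psi>H u \<otimes> (t \<otimes> a \<otimes> inv (\<tau> (t \<otimes> a)))"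
    then show "\<psi>H v \<otimes> t' = \<psi>H u \<otimes> t \<otimes> a" using c assms(5) by (simp add: m_assoc)
  qed
qed

lemma right_mult_rel_LG:
  assumes "a \<in> carrier G"
  shows "right_mult_rel G LG \<psi>G a = (\<Union>t\<in>T. {(u @ [t], v @ [\<tau> (t \<otimes> a)]) | u v.
    (u, v) \<in> right_mult_rel G LH \<psi>H (t \<otimes> a \<otimes> inv (\<tau> (t \<otimes> a)))})"
proof (intro equalityI subsetI)
  fix p assume "p \<in> right_mult_rel G LG \<psi>G a"
  then obtain u t v t' where p: "p = (u @ [t], v @ [t'])" "u \<in> LH" "t \<in> T" "v \<in> LH" "t' \<in> T"
    "\<psi>H v \<otimes> t' = \<psi>H u \<otimes> t \<otimes> a"
    by (auto simp: right_mult_rel_def LG_def)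
  then show "p \<in> (\<Union>t\<in>T. {(u @ [t], v @ [\<tau> (t \<otimes> a)]) | u v.
      (u, v) \<in> right_mult_rel G LH \<psi>H (t \<otimes> a \<otimes> inv (\<tau> (t \<otimes> a)))})"
    using snoc_mult_iff[OF p(2,4,3,5) assms] by (auto simp: right_mult_rel_def)
next
  fix p assume "p \<in> (\<Union>t\<in>T. {(u @ [t], v @ [\<tau> (t \<otimes> a)]) | u v.
      (u, v) \<in> right_mult_rel G LH \<psi>H (t \<otimes> a \<otimes> inv (\<tau> (t \<otimes> a)))})"
  then obtain t u v where p: "p = (u @ [t], v @ [\<tau> (t \<otimes> a)])" "t \<in> T" "u \<in> LH" "v \<in> LH"
    "\<psi>H v = \<psi>H u \<otimes> (t \<otimes> a \<otimes> inv (\<tau> (t \<otimes> a)))"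
    by (auto simp: right_mult_rel_def)
  moreover have "\<tau> (t \<otimes> a) \<in> T" using p(2) assms T_carrier \<tau>_in_T by blast
  ultimately show "p \<in> right_mult_rel G LG \<psi>G a"
    using snoc_mult_iff[OF p(3,4,2) _ assms] by (auto simp: right_mult_rel_def LG_def)
qed

lemma cayley_aut_rep_LG: "cayley_aut_rep G A LG \<psi>G"
  unfolding cayley_aut_rep_iff
proof (intro conjI ballI regular_LG bij_\<psi>G)
  fix a assume "a \<in> A"
  then have a: "a \<in> carrier G" using A_carrier by blast
  have "FA_recognizable (symgens G A) {(u @ [t], v @ [\<tau> (t \<otimes> a)]) | u v.
      (u, v) \<in> right_mult_rel G LH \<psi>H (t \<otimes> a \<otimes> inv (\<tau> (t \<otimes> a)))}" if t: "t \<in> T" for t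
  proof (rule FA_recognizable_snoc)
    have "t \<otimes> a \<in> carrier G" using t a T_carrier by blast
    then show "FA_recognizable (symgens G A) (right_mult_rel G LH \<psi>H (t \<otimes> a \<otimes> inv (\<tau> (t \<otimes> a))))"
      using right_mult_rel_H \<tau>_coset by blast
    show "t \<in> symgens G A" "\<tau> (t \<otimes> a) \<in> symgens G A"
      using t \<open>t \<otimes> a \<in> carrier G\<close> \<tau>_in_T T_A by (auto simp: symgens_def)
  qed
  then show "FA_recognizable (symgens G A) (right_mult_rel G LG \<psi>G a)"
    unfolding right_mult_rel_LG[OF a] by (intro FA_recognizable_UN finite_T finite_symgens_A)
qed

lemma word_dist_snoc_le:
  assumes "u \<in> LH" "t \<in> T"
  shows "word_dist G A (evalw G (u @ [t])) (\<psi>G (u @ [t])) \<le>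
    3 * word_dist (G\<lparr>carrier := H\<rparr>) B (evalw (G\<lparr>carrier := H\<rparr>) u) (\<psi>H u)"
proof -
  have "set u \<subseteq> H" using assms(1) LH_lists symgens_subset[OF subgroup_H B_H] by auto
  then have uH: "evalw G u \<in> H" by (rule evalw_in_subgroup[OF subgroup_H])
  have c: "evalw G u \<in> carrier G" "\<psi>H u \<in> carrier G" "t \<in> carrier G"
    using uH H_carrier \<psi>H_carrier[OF assms(1)] assms(2) T_carrier by auto
  define z where "z = inv (evalw G u) \<otimes> \<psi>H u"
  have "z \<in> H"
    unfolding z_def using uH \<psi>H_in_H[OF assms(1)] subgroup_H
    by (simp add: subgroup.m_closed subgroup.m_inv_closed)
  have "word_dist (G\<lparr>carrier := H\<rparr>) B (evalw (G\<lparr>carrier := H\<rparr>) u) (\<psi>H u) = word_length G B z"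
    using word_dist_carrier_update[OF subgroup_H B_H uH \<psi>H_in_H[OF assms(1)]]
    by (simp add: word_dist_def z_def)
  moreover have "inv (evalw G (u @ [t])) \<otimes> \<psi>G (u @ [t]) = inv t \<otimes> z \<otimes> t"
    using c \<open>set u \<subseteq> H\<close> H_carrier
    by (simp add: z_def evalw_append inv_mult_group m_assoc subset_trans)
  ultimately show ?thesis
    using word_length_conj_le[OF B_A A_carrier] T_A assms(2) \<open>z \<in> H\<close> generate_B_G
    by (auto simp: word_dist_def)
qed

lemma rep_fun_LG_le: "rep_fun G A LG \<psi>G n \<le> 3 * rep_fun (G\<lparr>carrier := H\<rparr>) B LH \<psi>H n"
proof -
  have "\<exists>u\<in>LH. length u \<le> length w \<and> word_dist G A (evalw G w) (\<psi>G w) \<le>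
      3 * word_dist (G\<lparr>carrier := H\<rparr>) B (evalw (G\<lparr>carrier := H\<rparr>) u) (\<psi>H u)"
    if "w \<in> LG" for w
  proof -
    from that obtain u t where "w = u @ [t]" "u \<in> LH" "t \<in> T" by (auto simp: LG_def)
    then show ?thesis using word_dist_snoc_le[of u t] by (intro bexI[of _ u]) auto
  qed
  then have "rep_fun G A LG \<psi>G n \<le> real 3 * rep_fun (G\<lparr>carrier := H\<rparr>) B LH \<psi>H n"
    using LH_lists regular_on_finite[OF regular_LH] regular_on_subset_lists[OF regular_LG]
      finite_symgens_A
    by (intro rep_fun_le_scaled)
  then show ?thesis by simp
qed

lemma in_B_G:
  assumes "fprec (rep_fun (G\<lparr>carrier := H\<rparr>) B LH \<psi>H) f"
  shows "in_B G f"
proof -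
  have "fprec (rep_fun G A LG \<psi>G) f"
    by (rule fprec_le_scaled[where c = 3]) (use rep_fun_LG_le assms in simp_all)
  then show ?thesis
    unfolding in_B_def using finite_A A_carrier generate_A cayley_aut_rep_LG by blast
qed

end

theorem mainTheorem4:
  fixes G :: "('a, 'b) monoid_scheme" and H :: "'a set" and f :: "nat \<Rightarrow> real"
  assumes "group G" and "fin_gen G" and "subgroup H G"
    and "finite (rcosets\<^bsub>G\<^esub> H)"
    and "in_frakF f"
    and "in_B (G\<lparr>carrier := H\<rparr>) f"
  shows "in_B G f"
proof -
  interpret group G by fact
  obtain A0 where A0: "finite A0" "A0 \<subseteq> carrier G" "generate G A0 = carrier G"
    using assms(2) unfolding fin_gen_def by blast
  obtain B LH \<psi>H where B: "finite B" "B \<subseteq> H" "generate (G\<lparr>carrier := H\<rparr>) B = H"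
    and rep_H: "cayley_aut_rep (G\<lparr>carrier := H\<rparr>) B LH \<psi>H"
    and fprec_H: "fprec (rep_fun (G\<lparr>carrier := H\<rparr>) B LH \<psi>H) f"
    using assms(6) unfolding in_B_def by auto
  obtain T \<tau> where T: "finite T" "T \<subseteq> carrier G" "\<And>g. g \<in> carrier G \<Longrightarrow> \<tau> g \<in> T"
    "\<And>g. g \<in> carrier G \<Longrightarrow> g \<otimes>\<^bsub>G\<^esub> inv\<^bsub>G\<^esub> (\<tau> g) \<in> H"
    "\<And>g t. g \<in> carrier G \<Longrightarrow> t \<in> T \<Longrightarrow> g \<otimes>\<^bsub>G\<^esub> inv\<^bsub>G\<^esub> t \<in> H \<Longrightarrow> t = \<tau> g"
    using right_transversal[OF assms(3,4)] by blast
  define A where "A = A0 \<union> B \<union> T"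
  have A: "finite A" "A \<subseteq> carrier G"
    using A0 B(1,2) T(1,2) subgroup.subset[OF assms(3)] by (auto simp: A_def)
  moreover have "generate G A = carrier G"
    using generate_incl[OF A(2)] mono_generate[of A0 A] A0(3) by (auto simp: A_def)
  ultimately interpret finite_index_extension G H T \<tau> B LH \<psi>H A
    using assms(3) T B(2,3) rep_H
    by (intro finite_index_extension.intro finite_index_extension_axioms.intro is_group)
      (auto simp: A_def)
  show ?thesis by (rule in_B_G[OF fprec_H])
qed

end
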